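(* Let $\Omega_1,\Omega_2\subset\mathbb{C}$ and $Y\subsetneq\mathbb{C}$ be domains. Suppose $f:\Omega_1\to\Omega_2$ is holomorphic with $f(a)=b$ and $f(t)\neq b$ for all $t\in\Omega_1\setminus\{a\}$. Then for every $c\in Y$, $$\mathscr{C}_{\Omega_2}^{Y,c}(f(a))\,|f'(a)|\leq \mathscr{C}_{\Omega_1}^{Y,c}(a).$$
   Context: $\mathbb{D}=\{z\in\mathbb{C}:|z|<1\}$. For domains $\Omega\subset\mathbb{C}$, $Y\subsetneq\mathbb{C}$, and points $w\in\Omega$, $s\in Y$, let $\mathcal{H}^s_w(\Omega,Y)$ be the set of holomorphic maps $h:\Omega\to Y$ with $h(w)=s$ and $h(z)\neq s$ for all $z\in\Omega\setminus\{w\}$. For a domain $Y\subsetneq\mathbb{C}$ and $v\in Y$, the Hurwitz density is $\eta_Y(v)=2/r_Y(v)$, where $r_Y(v)=\max\{h'(0): h:\mathbb{D}\to Y \text{ holomorphic},\ h(0)=v,\ h(z)\neq v \text{ for } z\in\mathbb{D}\setminus\{0\},\ h'(0)>0\}$. The Carathéodory density of the Hurwitz metric of $\Omega$ relative to $Y$ is $\mathscr{C}_{\Omega}^{Y,s}(w)=\sup\{\eta_Y(h(w))|h'(w)| : h\in\mathcal{H}^s_w(\Omega,Y)\}$, defined to be $0$ if $\mathcal{H}^s_w(\Omega,Y)=\emptyset$. *)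

theory Defs
  imports "HOL-Complex_Analysis.Complex_Analysis"
begin

definition hurwitz_class :: "complex set \<Rightarrow> complex set \<Rightarrow> complex \<Rightarrow> complex \<Rightarrow> (complex \<Rightarrow> complex) set" where
  "hurwitz_class \<Omega> Y w s =
     {h. h holomorphic_on \<Omega> \<and> h ` \<Omega> \<subseteq> Y \<and> h w = s \<and> (\<forall>z\<in>\<Omega> - {w}. h z \<noteq> s)}"

text \<open>Hurwitz radius r_Y(v): the maximum of h'(0) over h in H^v_0(D,Y) with h'(0) > 0
  (the maximum is attained, so it equals the supremum).\<close>
definition hurwitz_radius :: "complex set \<Rightarrow> complex \<Rightarrow> real" where
  "hurwitz_radius Y v =
     Sup {Re (deriv h 0) | h. h \<in> hurwitz_class (ball 0 1) Y 0 v
                               \<and> deriv h 0 \<in> \<real> \<and> Re (deriv h 0) > 0}"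

definition hurwitz_density :: "complex set \<Rightarrow> complex \<Rightarrow> real" where
  "hurwitz_density Y v = 2 / hurwitz_radius Y v"

definition caratheodory_hurwitz :: "complex set \<Rightarrow> complex set \<Rightarrow> complex \<Rightarrow> complex \<Rightarrow> ereal" where
  "caratheodory_hurwitz \<Omega> Y s w =
     (if hurwitz_class \<Omega> Y w s = {} then 0
      else (SUP h\<in>hurwitz_class \<Omega> Y w s. ereal (hurwitz_density Y (h w) * cmod (deriv h w))))"

end

theory Submission
  imports Defs
begin

text \<open>Precomposition with \<open>f\<close> maps \<open>H\<^sup>c\<^sub>b(\<Omega>2, Y)\<close> into \<open>H\<^sup>c\<^sub>a(\<Omega>1, Y)\<close>; it multiplies the
  derivative at the base point by \<open>f'(a)\<close> and leaves the density factor \<open>\<eta>\<^sub>Y(c)\<close> unchanged, so the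
  inequality of suprema is immediate. When \<open>H\<^sup>c\<^sub>b(\<Omega>2, Y)\<close> is empty the left side is \<open>0\<close>,
  and the right side is nonnegative because \<open>\<eta>\<^sub>Y(c) \<ge> 0\<close>. This is the only analytic input: it
  needs the supremum defining \<open>r\<^sub>Y(c)\<close> to be finite (the real \<open>Sup\<close> of an unbounded set is
  unspecified). For this, with \<open>p \<notin> Y\<close>, write
  \<open>h = c + (p - c)(1 - exp \<psi>)\<close> with \<open>\<psi>(0) = 0\<close>; as \<open>h\<close> takes the value \<open>c\<close> only at \<open>0\<close>, \<open>\<psi>\<close>
  omits \<open>\<plusminus>2\<pi>i\<close>, so \<open>\<psi>/(4\<pi>i) + 1/2\<close> omits \<open>0\<close> and \<open>1\<close>, and Landau's theorem bounds
  \<open>\<psi>'(0)\<close>, hence \<open>h'(0)\<close>, uniformly.\<close>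

lemma Landau_deriv_bound_unit_disc:
  obtains B :: real where
    "\<And>f. \<lbrakk>f holomorphic_on ball 0 1; \<And>z. z \<in> ball 0 1 \<Longrightarrow> f z \<noteq> 0 \<and> f z \<noteq> 1; f 0 = 1/2\<rbrakk>
          \<Longrightarrow> norm (deriv f 0) \<le> B"
proof -
  obtain R where R_pos: "\<And>z. 0 < R z"
    and R: "\<And>f. \<lbrakk>f holomorphic_on cball 0 (R (f 0));
                  \<And>z. norm z \<le> R (f 0) \<Longrightarrow> f z \<noteq> 0 \<and> f z \<noteq> 1\<rbrakk> \<Longrightarrow> norm (deriv f 0) < 1"
    using Landau_Picard by blast
  define r where "r = R (1/2)"
  have "r > 0" using R_pos by (simp add: r_def)
  show thesis
  proof (rule that)
    fix f assume hol: "f holomorphic_on ball 0 1"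
      and omits: "\<And>z. z \<in> ball 0 1 \<Longrightarrow> f z \<noteq> 0 \<and> f z \<noteq> 1" and f0: "f 0 = 1/2"
    define k where "k = 2 * complex_of_real r"
    have "k \<noteq> 0" using \<open>r > 0\<close> by (simp add: k_def)
    have in_disc: "w / k \<in> ball 0 1" if "norm w \<le> r" for w
      using that \<open>r > 0\<close> by (simp add: k_def norm_divide)
    define F where "F = f \<circ> (\<lambda>w. w / k)"
    have "R (F 0) = r" by (simp add: F_def r_def f0 del: divide_const_simps)
    have "F holomorphic_on cball 0 r"
      unfolding F_def
      by (rule holomorphic_on_compose_gen[OF _ hol]) (auto intro!: holomorphic_intros in_disc)
    moreover have "F z \<noteq> 0 \<and> F z \<noteq> 1" if "norm z \<le> r" for z
      using that omits in_disc by (simp add: F_def)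
    ultimately have "norm (deriv F 0) < 1"
      using R[of F] \<open>R (F 0) = r\<close> by simp
    moreover have "deriv F 0 = deriv f 0 / k"
    proof -
      have "(f has_field_derivative deriv f 0) (at (0 / k))"
        using hol by (auto intro: holomorphic_derivI)
      then have "((\<lambda>w. f (w / k)) has_field_derivative deriv f 0 * (1 / k)) (at 0)"
        by (rule DERIV_chain2) (auto intro!: derivative_eq_intros simp: \<open>k \<noteq> 0\<close>)
      then show ?thesis unfolding F_def o_def by (simp add: DERIV_imp_deriv)
    qed
    ultimately show "norm (deriv f 0) \<le> 2 * r"
      using \<open>r > 0\<close> by (simp add: k_def norm_divide)
  qed
qed

lemma holomorphic_logarithm_exists_normalized:
  assumes "convex S" "open S" "f holomorphic_on S" "\<And>z. z \<in> S \<Longrightarrow> f z \<noteq> 0"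
    and "z0 \<in> S" "f z0 = 1"
  obtains g where "g holomorphic_on S" "g z0 = 0" "\<And>z. z \<in> S \<Longrightarrow> exp (g z) = f z"
proof -
  obtain g where g: "g holomorphic_on S" "\<And>z. z \<in> S \<Longrightarrow> exp (g z) = f z"
    using holomorphic_logarithm_exists assms by metis
  show thesis
  proof (rule that[of "\<lambda>z. g z - g z0"])
    show "(\<lambda>z. g z - g z0) holomorphic_on S" using g(1) by (intro holomorphic_intros)
  qed (use g(2) assms(5,6) in \<open>auto simp: exp_diff\<close>)
qed

lemma hurwitz_class_deriv_bounded:
  assumes "p \<notin> Y"
  obtains B where "\<And>h. h \<in> hurwitz_class (ball 0 1) Y 0 c \<Longrightarrow> norm (deriv h 0) \<le> B"
proof -
  obtain B where B: "\<And>F. \<lbrakk>F holomorphic_on ball 0 1; \<And>z. z \<in> ball 0 1 \<Longrightarrow> F z \<noteq> 0 \<and> F z \<noteq> 1;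
                            F 0 = 1/2\<rbrakk> \<Longrightarrow> norm (deriv F 0) \<le> B"
    using Landau_deriv_bound_unit_disc by blast
  show thesis
  proof (rule that)
    fix h assume "h \<in> hurwitz_class (ball 0 1) Y 0 c"
    then have hol: "h holomorphic_on ball 0 1" and omits_p: "\<And>z. z \<in> ball 0 1 \<Longrightarrow> h z \<noteq> p"
      and h0: "h 0 = c" and c_only_at_0: "\<And>z. z \<in> ball 0 1 \<Longrightarrow> h z = c \<Longrightarrow> z = 0"
      using assms by (auto simp: hurwitz_class_def image_subset_iff)
    have "p \<noteq> c" using omits_p h0 by force
    obtain \<psi> where \<psi>_hol: "\<psi> holomorphic_on ball 0 1" and \<psi>0: "\<psi> 0 = 0"
      and exp_\<psi>: "\<And>z. z \<in> ball 0 1 \<Longrightarrow> exp (\<psi> z) = 1 - (h z - c) / (p - c)"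
    proof (rule holomorphic_logarithm_exists_normalized[of "ball 0 1"])
      show "(\<lambda>z. 1 - (h z - c) / (p - c)) holomorphic_on ball 0 1"
        using hol \<open>p \<noteq> c\<close> by (intro holomorphic_intros) auto
    qed (use omits_p h0 \<open>p \<noteq> c\<close> in \<open>auto simp: field_simps\<close>)
    have h_eq: "h z = c + (p - c) * (1 - exp (\<psi> z))" if "z \<in> ball 0 1" for z
      using exp_\<psi>[OF that] \<open>p \<noteq> c\<close> by (simp add: field_simps)
    have \<psi>_omits: "\<psi> z \<noteq> 2 * pi * \<i> \<and> \<psi> z \<noteq> - (2 * pi * \<i>)" if z: "z \<in> ball 0 1" for z
    proof -
      have "\<psi> z = 0" if "exp (\<psi> z) = 1"
        using c_only_at_0[OF z] h_eq[OF z] that \<psi>0 by simp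
      then show ?thesis by (auto simp: exp_minus)
    qed
    define F where "F z = \<psi> z / (4 * pi * \<i>) + 1/2" for z
    have "norm (deriv F 0) \<le> B"
    proof (rule B)
      show "F holomorphic_on ball 0 1" unfolding F_def using \<psi>_hol by (intro holomorphic_intros) auto
      show "F z \<noteq> 0 \<and> F z \<noteq> 1" if "z \<in> ball 0 1" for z
        using \<psi>_omits[OF that] by (auto simp: F_def field_simps add_eq_0_iff)
    qed (simp add: F_def \<psi>0)
    moreover have "norm (deriv h 0) = 4 * pi * norm (p - c) * norm (deriv F 0)"
    proof -
      have "(\<psi> has_field_derivative deriv \<psi> 0) (at 0)"
        using \<psi>_hol by (auto intro: holomorphic_derivI)
      then have "((\<lambda>z. c + (p - c) * (1 - exp (\<psi> z))) has_field_derivative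
                   - (p - c) * deriv \<psi> 0) (at 0)"
        using \<psi>0 by (auto intro!: derivative_eq_intros simp: algebra_simps)
      then have "(h has_field_derivative - (p - c) * deriv \<psi> 0) (at 0)"
        by (rule has_field_derivative_transform_within_open[where S = "ball 0 1"]) (auto simp: h_eq)
      then have "deriv h 0 = - (p - c) * deriv \<psi> 0"
        by (rule DERIV_imp_deriv)
      moreover have "deriv F 0 = deriv \<psi> 0 / (4 * pi * \<i>)"
        unfolding F_def using \<psi>_hol
        by (auto intro!: DERIV_imp_deriv derivative_eq_intros holomorphic_derivI)
      ultimately show ?thesis by (simp add: norm_mult norm_divide norm_minus_commute)
    qed
    ultimately show "norm (deriv h 0) \<le> 4 * pi * norm (p - c) * B"
      by (simp add: mult_left_mono)
  qed
qed

lemma hurwitz_radius_pos: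
  assumes "open Y" "Y \<noteq> UNIV" "c \<in> Y"
  shows "hurwitz_radius Y c > 0"
proof -
  define S where "S = {Re (deriv h 0) | h. h \<in> hurwitz_class (ball 0 1) Y 0 c
                                           \<and> deriv h 0 \<in> \<real> \<and> Re (deriv h 0) > 0}"
  obtain p where "p \<notin> Y" using assms(2) by blast
  then obtain B where B: "\<And>h. h \<in> hurwitz_class (ball 0 1) Y 0 c \<Longrightarrow> norm (deriv h 0) \<le> B"
    by (rule hurwitz_class_deriv_bounded) blast
  have "bdd_above S"
  proof (rule bdd_aboveI)
    fix x assume "x \<in> S"
    then obtain h where x: "x = Re (deriv h 0)" and h: "h \<in> hurwitz_class (ball 0 1) Y 0 c"
      unfolding S_def by blast
    show "x \<le> B" using complex_Re_le_cmod[of "deriv h 0"] B[OF h] x by linarith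
  qed
  obtain e where "e > 0" "ball c e \<subseteq> Y" using assms(1,3) open_contains_ball by blast
  define h where "h z = c + complex_of_real e * z" for z
  have "h ` ball 0 1 \<subseteq> ball c e"
    using \<open>e > 0\<close> by (auto simp: h_def dist_norm norm_mult)
  then have "h \<in> hurwitz_class (ball 0 1) Y 0 c"
    using \<open>e > 0\<close> \<open>ball c e \<subseteq> Y\<close> unfolding hurwitz_class_def h_def
    by (auto intro!: holomorphic_intros)
  moreover have "deriv h 0 = e"
    unfolding h_def by (auto intro!: DERIV_imp_deriv derivative_eq_intros)
  ultimately have "e \<in> S" unfolding S_def using \<open>e > 0\<close> by (intro CollectI exI[of _ h]) simp
  then have "e \<le> Sup S" using \<open>bdd_above S\<close> by (rule cSup_upper)
  then show ?thesis using \<open>e > 0\<close> unfolding hurwitz_radius_def S_def[symmetric] by linarith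
qed

lemma hurwitz_density_nonneg:
  assumes "open Y" "Y \<noteq> UNIV" "c \<in> Y"
  shows "hurwitz_density Y c \<ge> 0"
  using hurwitz_radius_pos[OF assms] by (simp add: hurwitz_density_def)

lemma caratheodory_hurwitz_eq_SUP:
  assumes "hurwitz_class \<Omega> Y w s \<noteq> {}"
  shows "caratheodory_hurwitz \<Omega> Y s w
           = (SUP h\<in>hurwitz_class \<Omega> Y w s. ereal (hurwitz_density Y s * cmod (deriv h w)))"
proof -
  have "h w = s" if "h \<in> hurwitz_class \<Omega> Y w s" for h
    using that by (simp add: hurwitz_class_def)
  then show ?thesis
    using assms unfolding caratheodory_hurwitz_def by (auto intro!: SUP_cong)
qed

lemma caratheodory_hurwitz_upper:
  assumes "h \<in> hurwitz_class \<Omega> Y w s"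
  shows "ereal (hurwitz_density Y s * cmod (deriv h w)) \<le> caratheodory_hurwitz \<Omega> Y s w"
  using assms by (subst caratheodory_hurwitz_eq_SUP) (auto intro: SUP_upper)

lemma caratheodory_hurwitz_nonneg:
  assumes "open Y" "Y \<noteq> UNIV" "s \<in> Y"
  shows "caratheodory_hurwitz \<Omega> Y s w \<ge> 0"
proof (cases "hurwitz_class \<Omega> Y w s = {}")
  case False
  then obtain h where "h \<in> hurwitz_class \<Omega> Y w s" by blast
  then have "ereal (hurwitz_density Y s * cmod (deriv h w)) \<le> caratheodory_hurwitz \<Omega> Y s w"
    by (rule caratheodory_hurwitz_upper)
  moreover have "0 \<le> ereal (hurwitz_density Y s * cmod (deriv h w))"
    using hurwitz_density_nonneg[OF assms] by simp
  ultimately show ?thesis by (rule order_trans[rotated])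
qed (simp add: caratheodory_hurwitz_def)

lemma hurwitz_class_comp:
  assumes "f \<in> hurwitz_class \<Omega>1 \<Omega>2 a b" "h \<in> hurwitz_class \<Omega>2 Y b c"
  shows "h \<circ> f \<in> hurwitz_class \<Omega>1 Y a c"
  using assms unfolding hurwitz_class_def
  by (auto intro: holomorphic_on_compose_gen simp: image_subset_iff)

lemma hurwitz_class_comp_deriv_le:
  assumes "open \<Omega>1" "open \<Omega>2" "a \<in> \<Omega>1"
    and "f \<in> hurwitz_class \<Omega>1 \<Omega>2 a b" "h \<in> hurwitz_class \<Omega>2 Y b c"
  shows "ereal (hurwitz_density Y c * cmod (deriv h b)) * ereal (cmod (deriv f a))
           \<le> caratheodory_hurwitz \<Omega>1 Y c a"
proof -
  have "f holomorphic_on \<Omega>1" "f a = b" "b \<in> \<Omega>2" "h holomorphic_on \<Omega>2"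
    using assms(3-5) by (auto simp: hurwitz_class_def)
  then have "deriv (h \<circ> f) a = deriv h b * deriv f a"
    using assms(1-3) by (metis deriv_chain holomorphic_on_imp_differentiable_at)
  then show ?thesis
    using caratheodory_hurwitz_upper[OF hurwitz_class_comp[OF assms(4,5)]]
    by (simp add: norm_mult mult.assoc)
qed

theorem theorem3p11:
  fixes \<Omega>1 \<Omega>2 Y :: "complex set" and f :: "complex \<Rightarrow> complex" and a b c :: complex
  assumes "open \<Omega>1" "connected \<Omega>1"
    and "open \<Omega>2" "connected \<Omega>2"
    and "open Y" "connected Y" "Y \<noteq> UNIV"
    and "f holomorphic_on \<Omega>1" "f ` \<Omega>1 \<subseteq> \<Omega>2"
    and "a \<in> \<Omega>1" "f a = b" "\<forall>t\<in>\<Omega>1 - {a}. f t \<noteq> b"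
    and "c \<in> Y"
  shows "caratheodory_hurwitz \<Omega>2 Y c (f a) * ereal (cmod (deriv f a))
           \<le> caratheodory_hurwitz \<Omega>1 Y c a"
proof (cases "hurwitz_class \<Omega>2 Y b c = {}")
  case True
  then have "caratheodory_hurwitz \<Omega>2 Y c (f a) = 0"
    by (simp add: caratheodory_hurwitz_def assms(11))
  then show ?thesis using caratheodory_hurwitz_nonneg[OF assms(5,7,13)] by simp
next
  case False
  have f: "f \<in> hurwitz_class \<Omega>1 \<Omega>2 a b" using assms(8-12) by (auto simp: hurwitz_class_def)
  have "caratheodory_hurwitz \<Omega>2 Y c (f a) * ereal (cmod (deriv f a))
          = (SUP h\<in>hurwitz_class \<Omega>2 Y b c. ereal (hurwitz_density Y c * cmod (deriv h b)))
              * ereal (cmod (deriv f a))"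
    unfolding assms(11) caratheodory_hurwitz_eq_SUP[OF False] ..
  also have "\<dots> = (SUP h\<in>hurwitz_class \<Omega>2 Y b c.
                     ereal (hurwitz_density Y c * cmod (deriv h b)) * ereal (cmod (deriv f a)))"
    by (rule Sup_ereal_mult_right'[OF False norm_ge_zero])
  also have "\<dots> \<le> caratheodory_hurwitz \<Omega>1 Y c a"
    by (rule SUP_least) (rule hurwitz_class_comp_deriv_le[OF assms(1,3,10) f])
  finally show ?thesis .
qed

end
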